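(* The monomials $X_1^rX_2^s(X_2^* )^t(X_1^* )^u(Q')^v$, $r,s,t,u,v\in\mathbb Z_{\ge0}$, where $Q'=Q-X_1X_1^*-X_2X_2^*$, form a $\mathbb C$-linear basis of $\mathcal X$.
   Context: Fix $0<q<1$. $\mathcal X$ is the unital complex $*$-algebra generated by $X_1,X_1^*,X_2,X_2^*,Q$ with involution $(X_i)^*=X_i^*$, $Q^*=Q$, subject to the relations $X_1X_2=qX_2X_1$, $X_1^*X_2=qX_2X_1^*$, $X_2^*X_2=q^2X_2X_2^*+(1-q^2)Q$, $X_1^*X_1=q^2X_1X_1^*+(1-q^2)(Q-X_2X_2^* )$, $Q$ central, together with the $*$-images of these relations. *)

theory Defs
  imports Complex_Main "HOL-Library.Function_Algebras"
begin

text \<open>The free unital complex algebra on the generators X1, X1*, X2, X2*, Q is modelled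
as finitely supported functions from words (lists of generators) to complex numbers;
the algebra X is its quotient by the two-sided ideal generated by the defining
relations together with their *-images.  A basis of the quotient is expressed as:
the given elements span modulo the ideal, and no nontrivial finite linear
combination of them lies in the ideal.\<close>

datatype gen = X1 | X1s | X2 | X2s | Qg

fun gstar :: "gen \<Rightarrow> gen" where
  "gstar X1 = X1s" | "gstar X1s = X1" | "gstar X2 = X2s" | "gstar X2s = X2" | "gstar Qg = Qg"

type_synonym elt = "gen list \<Rightarrow> complex"

definition wd :: "gen list \<Rightarrow> elt" where
  "wd u = (\<lambda>w. if w = u then 1 else 0)"

definition fscale :: "complex \<Rightarrow> elt \<Rightarrow> elt" where
  "fscale c f = (\<lambda>w. c * f w)"

definition fmul :: "elt \<Rightarrow> elt \<Rightarrow> elt" where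
  "fmul f g = (\<lambda>w. \<Sum>n\<in>{0..length w}. f (take n w) * g (drop n w))"

definition fstar :: "elt \<Rightarrow> elt" where
  "fstar f = (\<lambda>w. cnj (f (rev (map gstar w))))"

definition fpow :: "elt \<Rightarrow> nat \<Rightarrow> elt" where
  "fpow f n = (fmul f ^^ n) (wd [])"

definition base_rels :: "real \<Rightarrow> elt set" where
  "base_rels q =
     {wd [X1, X2] - fscale (of_real q) (wd [X2, X1]),
      wd [X1s, X2] - fscale (of_real q) (wd [X2, X1s]),
      wd [X2s, X2] - fscale (of_real (q^2)) (wd [X2, X2s]) - fscale (of_real (1 - q^2)) (wd [Qg]),
      wd [X1s, X1] - fscale (of_real (q^2)) (wd [X1, X1s])
        - fscale (of_real (1 - q^2)) (wd [Qg] - wd [X2, X2s])}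
   \<union> {wd [Qg, g] - wd [g, Qg] | g. True}"

definition rels :: "real \<Rightarrow> elt set" where
  "rels q = base_rels q \<union> fstar ` base_rels q"

inductive_set gen_ideal :: "elt set \<Rightarrow> elt set" for R where
  zero: "0 \<in> gen_ideal R"
| step: "r \<in> R \<Longrightarrow> p \<in> gen_ideal R \<Longrightarrow>
           p + fscale c (fmul (fmul (wd u) r) (wd v)) \<in> gen_ideal R"

definition Qprime :: elt where
  "Qprime = wd [Qg] - wd [X1, X1s] - wd [X2, X2s]"

definition monomial :: "nat \<times> nat \<times> nat \<times> nat \<times> nat \<Rightarrow> elt" where
  "monomial k = (case k of (r, s, t, u, v) \<Rightarrow>
     fmul (wd (replicate r X1 @ replicate s X2 @ replicate t X2s @ replicate u X1s))
          (fpow Qprime v))"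

end

theory Submission
  imports Defs "HOL-Library.Poly_Mapping"
begin

text \<open>Spanning is a rewriting argument. Modulo the relations, \<open>Q' = Q - X\<^sub>1X\<^sub>1\<^sup>* - X\<^sub>2X\<^sub>2\<^sup>*\<close>
  commutes with every generator up to a power of \<open>q\<close> (this is where the centrality of \<open>Q\<close>
  enters), and the relations \<open>X\<^sub>1\<^sup>*X\<^sub>1 = X\<^sub>1X\<^sub>1\<^sup>* + (1 - q\<^sup>2)Q'\<close>,
  \<open>X\<^sub>2\<^sup>*X\<^sub>2 = X\<^sub>2X\<^sub>2\<^sup>* + (1 - q\<^sup>2)(Q' + X\<^sub>1X\<^sub>1\<^sup>*)\<close> move a starred generator to
  the right past the powers of \<open>X\<^sub>1\<close> and \<open>X\<^sub>2\<close>, the correction terms being brought into order by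
  the same rules. So left multiplication by each generator,
  and by \<open>Q = Q' + X\<^sub>1X\<^sub>1\<^sup>* + X\<^sub>2X\<^sub>2\<^sup>*\<close>, preserves the span of the ordered monomials
  modulo the ideal.

  Independence: the same rewriting rules, read as formulas for left multiplication on
  coefficient families indexed by \<open>(r, s, t, u, v)\<close>, define operators on the space of all such
  families that satisfy the defining relations. The free algebra therefore acts with the ideal in
  the kernel, and the monomial with index \<open>k\<close> sends the unit vector \<open>e\<^sub>0\<close> to \<open>e\<^sub>k\<close>.\<close>

section \<open>Monoid algebras and their ideals\<close>

lemma poly_mapping_single_induct [case_names zero add_single]:
  fixes x :: "'a \<Rightarrow>\<^sub>0 'b::monoid_add"
  assumes "P 0" and "\<And>x l c. P x \<Longrightarrow> P (x + Poly_Mapping.single l c)"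
  shows "P x"
proof (induction x rule: update_induct)
  case const
  then show ?case using assms(1) .
next
  case (update f a b)
  have "Poly_Mapping.update a b f = f + Poly_Mapping.single a b"
    by (rule poly_mapping_eqI)
      (use update(1) in \<open>auto simp: lookup_update lookup_add lookup_single when_def in_keys_iff\<close>)
  then show ?case using assms(2)[OF update(3)] by simp
qed

definition scalar :: "'c \<Rightarrow> 'm::monoid_add \<Rightarrow>\<^sub>0 'c::comm_semiring_1" where
  "scalar c = Poly_Mapping.single 0 c"

lemma scalar_mult_single: "scalar c * Poly_Mapping.single l d = Poly_Mapping.single l (c * d)"
  by (simp add: scalar_def mult_single)

lemma scalar_commute: "scalar c * x = x * scalar c"
  by (induction x rule: poly_mapping_single_induct)
    (simp_all add: distrib_left distrib_right scalar_mult_single scalar_def mult_single mult.commute)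

lemma mult_scalar_mult: "x * (scalar c * y) = scalar c * (x * y)"
  by (simp add: mult.assoc[symmetric] scalar_commute[of c x])

lemma scalar_scalar_mult: "scalar a * (scalar b * x) = scalar (a * b) * x"
  by (simp add: mult.assoc[symmetric] scalar_def mult_single)

lemma scalar_add: "scalar (a + b) = scalar a + scalar b"
  by (simp add: scalar_def single_add)

lemma scalar_one [simp]: "scalar 1 = 1"
  by (simp add: scalar_def)

lemma lookup_scalar_mult: "Poly_Mapping.lookup (scalar c * x) l = c * Poly_Mapping.lookup x l"
proof (induction x rule: poly_mapping_single_induct)
  case zero
  then show ?case by simp
next
  case (add_single x m d)
  then show ?case by (simp add: distrib_left scalar_mult_single lookup_add lookup_single when_def)
qed

lemma single_mult_single_mult:
  "Poly_Mapping.single l c * (Poly_Mapping.single m d * y) = Poly_Mapping.single (l + m) (c * d) * y"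
  by (simp add: mult.assoc[symmetric] mult_single)

locale ring_ideal =
  fixes I :: "'a::ring_1 set"
  assumes zero_mem [simp]: "0 \<in> I"
    and add_mem: "x \<in> I \<Longrightarrow> y \<in> I \<Longrightarrow> x + y \<in> I"
    and mult_mem: "x \<in> I \<Longrightarrow> a * x * b \<in> I"
begin

lemma uminus_mem: "x \<in> I \<Longrightarrow> - x \<in> I"
  using mult_mem[of x "- 1" 1] by simp

lemma diff_mem: "x \<in> I \<Longrightarrow> y \<in> I \<Longrightarrow> x - y \<in> I"
  using add_mem uminus_mem by (metis diff_conv_add_uminus)

lemma mult_left_mem: "x \<in> I \<Longrightarrow> a * x \<in> I"
  using mult_mem[of x a 1] by simp

lemma mult_right_mem: "x \<in> I \<Longrightarrow> x * b \<in> I"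
  using mult_mem[of x 1 b] by simp

definition cong :: "'a \<Rightarrow> 'a \<Rightarrow> bool" (infix \<open>\<approx>\<close> 50) where
  "a \<approx> b \<longleftrightarrow> a - b \<in> I"

lemma cong_refl [simp]: "a \<approx> a"
  by (simp add: cong_def)

lemma cong_sym: "a \<approx> b \<Longrightarrow> b \<approx> a"
  unfolding cong_def using uminus_mem by fastforce

lemma cong_trans [trans]: "a \<approx> b \<Longrightarrow> b \<approx> c \<Longrightarrow> a \<approx> c"
  unfolding cong_def using add_mem by fastforce

lemma cong_add: "a \<approx> b \<Longrightarrow> c \<approx> d \<Longrightarrow> a + c \<approx> b + d"
  unfolding cong_def using add_mem by (metis add_diff_add)

lemma cong_mult: "a \<approx> b \<Longrightarrow> x * a * y \<approx> x * b * y"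
  unfolding cong_def using mult_mem[of "a - b" x y] by (simp add: algebra_simps)

lemma cong_mult_left: "a \<approx> b \<Longrightarrow> x * a \<approx> x * b"
  using cong_mult[of a b x 1] by simp

lemma cong_mult_right: "a \<approx> b \<Longrightarrow> a * y \<approx> b * y"
  using cong_mult[of a b 1 y] by simp

end

locale algebra_ideal = ring_ideal I for I :: "('m::monoid_add \<Rightarrow>\<^sub>0 'c::field) set"
begin

definition proportional :: "('m \<Rightarrow>\<^sub>0 'c) \<Rightarrow> ('m \<Rightarrow>\<^sub>0 'c) \<Rightarrow> bool"
    (infix \<open>\<sim>\<close> 50) where
  "X \<sim> Y \<longleftrightarrow> (\<exists>c. c \<noteq> 0 \<and> X \<approx> scalar c * Y)"

lemma proportionalI: "c \<noteq> 0 \<Longrightarrow> X \<approx> scalar c * Y \<Longrightarrow> X \<sim> Y"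
  unfolding proportional_def by blast

lemma proportional_refl [simp]: "X \<sim> X"
  using proportionalI[of 1 X X] by simp

lemma proportional_sym: "X \<sim> Y \<Longrightarrow> Y \<sim> X"
proof -
  assume "X \<sim> Y"
  then obtain c where c: "c \<noteq> 0" "X \<approx> scalar c * Y"
    unfolding proportional_def by blast
  have "scalar (inverse c) * X \<approx> scalar (inverse c) * (scalar c * Y)"
    using c(2) by (rule cong_mult_left)
  also have "scalar (inverse c) * (scalar c * Y) = Y"
    using c(1) by (simp add: scalar_scalar_mult)
  finally show "Y \<sim> X"
    using c(1) by (intro proportionalI[of "inverse c"]) (simp_all add: cong_sym)
qed

lemma proportional_trans [trans]: "X \<sim> Y \<Longrightarrow> Y \<sim> Z \<Longrightarrow> X \<sim> Z"
proof -
  assume "X \<sim> Y" "Y \<sim> Z"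
  then obtain c d where "c \<noteq> 0" "X \<approx> scalar c * Y" "d \<noteq> 0" "Y \<approx> scalar d * Z"
    unfolding proportional_def by blast
  then have "X \<approx> scalar c * (scalar d * Z)" "c * d \<noteq> 0"
    by (auto intro: cong_trans cong_mult_left)
  then show "X \<sim> Z"
    by (intro proportionalI[of "c * d"]) (simp_all add: scalar_scalar_mult)
qed

lemma proportional_mult: "X \<sim> Y \<Longrightarrow> a * X * b \<sim> a * Y * b"
proof -
  assume "X \<sim> Y"
  then obtain c where c: "c \<noteq> 0" "X \<approx> scalar c * Y"
    unfolding proportional_def by blast
  have "a * X * b \<approx> a * (scalar c * Y) * b"
    using c(2) by (rule cong_mult)
  also have "a * (scalar c * Y) * b = scalar c * (a * Y * b)"
    by (simp add: mult_scalar_mult mult.assoc)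
  finally show ?thesis
    using c(1) by (rule proportionalI[rotated])
qed

lemma proportional_mult_left: "X \<sim> Y \<Longrightarrow> a * X \<sim> a * Y"
  using proportional_mult[of X Y a 1] by simp

lemma proportional_mult_right: "X \<sim> Y \<Longrightarrow> X * b \<sim> Y * b"
  using proportional_mult[of X Y 1 b] by simp

lemma proportional_swap: "x * a \<sim> a * x \<Longrightarrow> x * (a * y) \<sim> a * (x * y)"
  using proportional_mult_right[of "x * a" "a * x" y] by (simp add: mult.assoc)

lemma proportional_swap_power: "x * a \<sim> a * x \<Longrightarrow> x * a ^ n \<sim> a ^ n * x"
proof (induction n)
  case (Suc n)
  have "x * a ^ Suc n = (x * a) * a ^ n"
    by (simp add: mult.assoc)
  also have "\<dots> \<sim> a * (x * a ^ n)"
    using proportional_mult_right[OF Suc.prems] by (simp add: mult.assoc)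
  also have "\<dots> \<sim> a * (a ^ n * x)"
    using Suc by (intro proportional_mult_left)
  finally show ?case
    by (simp add: mult.assoc)
qed simp

lemma skew_commute_power:
  assumes ab: "a * b \<approx> b * a + scalar c * y" and yb: "y * b \<sim> b * y"
  shows "\<exists>\<gamma>. a * b ^ Suc n \<approx> b ^ Suc n * a + scalar \<gamma> * (b ^ n * y)"
proof (induction n)
  case 0
  show ?case using ab by (intro exI[of _ c]) simp
next
  case (Suc n)
  then obtain \<gamma> where IH: "a * b ^ Suc n \<approx> b ^ Suc n * a + scalar \<gamma> * (b ^ n * y)"
    by blast
  obtain d where d: "y * b ^ Suc n \<approx> scalar d * (b ^ Suc n * y)"
    using proportional_swap_power[OF yb] unfolding proportional_def by blast
  have "a * b ^ Suc (Suc n) = (a * b) * b ^ Suc n"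
    by (simp add: mult.assoc)
  also have "\<dots> \<approx> (b * a + scalar c * y) * b ^ Suc n"
    using ab by (rule cong_mult_right)
  also have "\<dots> = b * (a * b ^ Suc n) + scalar c * (y * b ^ Suc n)"
    by (simp add: distrib_right mult.assoc)
  also have "\<dots> \<approx> b * (b ^ Suc n * a + scalar \<gamma> * (b ^ n * y))
      + scalar c * (scalar d * (b ^ Suc n * y))"
    by (rule cong_add[OF cong_mult_left[OF IH] cong_mult_left[OF d]])
  also have "\<dots> = b ^ Suc (Suc n) * a + scalar (\<gamma> + c * d) * (b ^ Suc n * y)"
    using mult_scalar_mult[of b \<gamma> "b ^ n * y"]
    by (simp add: distrib_left distrib_right scalar_add scalar_scalar_mult mult.assoc)
  finally show ?case by blast
qed

end

inductive_set ideal_span :: "('m::monoid_add \<Rightarrow>\<^sub>0 'c::comm_ring_1) set \<Rightarrow> ('m \<Rightarrow>\<^sub>0 'c) set"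
  for R where
  zero: "0 \<in> ideal_span R"
| step: "x \<in> ideal_span R \<Longrightarrow> r \<in> R
    \<Longrightarrow> x + Poly_Mapping.single u c * r * Poly_Mapping.single v 1 \<in> ideal_span R"

lemma ideal_span_add:
  assumes "x \<in> ideal_span R" and "y \<in> ideal_span R"
  shows "x + y \<in> ideal_span R"
  using assms(2)
proof (induction y rule: ideal_span.induct)
  case (step y r u c v)
  then show ?case
    using ideal_span.step[of "x + y" R r u c v] by (simp add: add.assoc)
qed (simp add: assms(1))

lemma ideal_span_mult_single_left:
  "x \<in> ideal_span R \<Longrightarrow> Poly_Mapping.single l d * x \<in> ideal_span R"
proof (induction x rule: ideal_span.induct)
  case (step x r u c v)
  then show ?case
    using ideal_span.step[of _ R r "l + u" "d * c" v]
    by (simp add: distrib_left mult.assoc[symmetric] mult_single)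
qed (simp add: ideal_span.zero)

lemma ideal_span_mult_single_right:
  "x \<in> ideal_span R \<Longrightarrow> x * Poly_Mapping.single l d \<in> ideal_span R"
proof (induction x rule: ideal_span.induct)
  case (step x r u c v)
  have "Poly_Mapping.single u c * r * Poly_Mapping.single v 1 * Poly_Mapping.single l d
      = Poly_Mapping.single u c * (r * scalar d) * Poly_Mapping.single (v + l) 1"
    by (simp add: mult.assoc scalar_mult_single mult_single)
  also have "\<dots> = (Poly_Mapping.single u c * scalar d) * r * Poly_Mapping.single (v + l) 1"
    by (simp only: scalar_commute[of d r, symmetric] mult.assoc)
  also have "Poly_Mapping.single u c * scalar d = Poly_Mapping.single u (c * d)"
    by (simp add: scalar_def mult_single)
  finally show ?case
    using step ideal_span.step[of _ R r u "c * d" "v + l"] by (simp add: distrib_right)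
qed (simp add: ideal_span.zero)

lemma ring_ideal_ideal_span: "ring_ideal (ideal_span R)"
proof
  show "a * x * b \<in> ideal_span R" if "x \<in> ideal_span R" for a x b
  proof -
    have "a * x \<in> ideal_span R"
      by (induction a rule: poly_mapping_single_induct)
        (simp_all add: ideal_span.zero distrib_right ideal_span_add ideal_span_mult_single_left that)
    then show ?thesis
      by (induction b rule: poly_mapping_single_induct)
        (simp_all add: ideal_span.zero distrib_left ideal_span_add ideal_span_mult_single_right)
  qed
qed (simp_all add: ideal_span.zero ideal_span_add)

lemma subset_ideal_span: "R \<subseteq> ideal_span R"
  using ideal_span.step[OF ideal_span.zero, of _ R 0 1 0] by auto

lemma ideal_span_subset:
  assumes "ring_ideal I" and "R \<subseteq> I"
  shows "ideal_span R \<subseteq> I"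
proof
  interpret ring_ideal I by fact
  show "x \<in> I" if "x \<in> ideal_span R" for x
    using that by induction (use assms(2) in \<open>auto intro: add_mem mult_mem\<close>)
qed

section \<open>The free algebra and its relators\<close>

(* Concatenation makes words a monoid, so that the monoid algebra gen list \<Rightarrow>\<^sub>0 complex is the free
   algebra on gen. *)
instantiation list :: (type) monoid_add
begin
definition zero_list_def: "0 = []"
definition plus_list_def: "xs + ys = xs @ ys"
instance by standard (auto simp: zero_list_def plus_list_def)
end

type_synonym fpoly = "gen list \<Rightarrow>\<^sub>0 complex"

definition gp :: "gen \<Rightarrow> fpoly" where
  "gp g = Poly_Mapping.single [g] 1"

lemma single_Cons: "Poly_Mapping.single (g # l) c = gp g * Poly_Mapping.single l c"
  by (simp add: gp_def mult_single plus_list_def)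

lemma gp_power: "gp g ^ n = Poly_Mapping.single (replicate n g) 1"
  by (induction n) (simp_all add: single_Cons flip: zero_list_def)

definition Q' :: fpoly where
  "Q' = gp Qg - gp X1 * gp X1s - gp X2 * gp X2s"

definition rel_X1X2 :: "complex \<Rightarrow> fpoly" where
  "rel_X1X2 z = gp X1 * gp X2 - scalar z * (gp X2 * gp X1)"
definition rel_X1sX2 :: "complex \<Rightarrow> fpoly" where
  "rel_X1sX2 z = gp X1s * gp X2 - scalar z * (gp X2 * gp X1s)"
definition rel_X2sX2 :: "complex \<Rightarrow> fpoly" where
  "rel_X2sX2 z = gp X2s * gp X2 - scalar (z\<^sup>2) * (gp X2 * gp X2s) - scalar (1 - z\<^sup>2) * gp Qg"
definition rel_X1sX1 :: "complex \<Rightarrow> fpoly" where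
  "rel_X1sX1 z = gp X1s * gp X1 - scalar (z\<^sup>2) * (gp X1 * gp X1s)
     - scalar (1 - z\<^sup>2) * (gp Qg - gp X2 * gp X2s)"
definition rel_X2sX1s :: "complex \<Rightarrow> fpoly" where
  "rel_X2sX1s z = gp X2s * gp X1s - scalar z * (gp X1s * gp X2s)"
definition rel_X2sX1 :: "complex \<Rightarrow> fpoly" where
  "rel_X2sX1 z = gp X2s * gp X1 - scalar z * (gp X1 * gp X2s)"
definition rel_central :: "gen \<Rightarrow> fpoly" where
  "rel_central g = gp Qg * gp g - gp g * gp Qg"

definition relators :: "complex \<Rightarrow> fpoly set" where
  "relators z = {rel_X1X2 z, rel_X1sX2 z, rel_X2sX2 z, rel_X1sX1 z, rel_X2sX1s z, rel_X2sX1 z}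
     \<union> range rel_central \<union> range (\<lambda>g. - rel_central g)"

(* Modulo the first six relators, the centrality of Q is equivalent to Q' commuting with the
   generators up to the factor z\<^sup>2 (relators_subset_iff); the reduction uses this form. *)
definition Q'_relators :: "complex \<Rightarrow> fpoly set" where
  "Q'_relators z =
     {Q' * gp X1 - scalar (z\<^sup>2) * (gp X1 * Q'), Q' * gp X2 - scalar (z\<^sup>2) * (gp X2 * Q'),
      gp X1s * Q' - scalar (z\<^sup>2) * (Q' * gp X1s), gp X2s * Q' - scalar (z\<^sup>2) * (Q' * gp X2s)}"

definition pbw_relators :: "complex \<Rightarrow> fpoly set" where
  "pbw_relators z = {rel_X1X2 z, rel_X1sX2 z, rel_X2sX2 z, rel_X1sX1 z, rel_X2sX1s z, rel_X2sX1 z}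
     \<union> Q'_relators z"

lemmas fpoly_expand = gp_def scalar_def Q'_def rel_X1X2_def rel_X1sX2_def rel_X2sX2_def
  rel_X1sX1_def rel_X2sX1s_def rel_X2sX1_def rel_central_def
  ring_distribs mult.assoc mult_single single_mult_single_mult
  zero_list_def plus_list_def lookup_add lookup_minus lookup_single when_def

lemma Q'_relator_identities:
  "Q' * gp X1 - scalar (z\<^sup>2) * (gp X1 * Q')
     = rel_central X1 - gp X1 * rel_X1sX1 z - gp X2 * rel_X2sX1 z + rel_X1X2 z * gp X2s"
  "Q' * gp X2 - scalar (z\<^sup>2) * (gp X2 * Q')
     = rel_central X2 - gp X1 * rel_X1sX2 z - scalar z * rel_X1X2 z * gp X1s - gp X2 * rel_X2sX2 z"
  "gp X1s * Q' - scalar (z\<^sup>2) * (Q' * gp X1s)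
     = - rel_central X1s - rel_X1sX1 z * gp X1s - rel_X1sX2 z * gp X2s + gp X2 * rel_X2sX1s z"
  "gp X2s * Q' - scalar (z\<^sup>2) * (Q' * gp X2s)
     = - rel_central X2s - rel_X2sX1 z * gp X1s - scalar z * gp X1 * rel_X2sX1s z - rel_X2sX2 z * gp X2s"
  by (rule poly_mapping_eqI; simp add: fpoly_expand; auto simp: algebra_simps power2_eq_square)+

lemma rel_central_Qg [simp]: "rel_central Qg = 0"
  by (simp add: rel_central_def)

lemma rel_central_identities:
  "rel_central X1 = (Q' * gp X1 - scalar (z\<^sup>2) * (gp X1 * Q'))
     + gp X1 * rel_X1sX1 z + gp X2 * rel_X2sX1 z - rel_X1X2 z * gp X2s"
  "rel_central X2 = (Q' * gp X2 - scalar (z\<^sup>2) * (gp X2 * Q'))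
     + gp X1 * rel_X1sX2 z + scalar z * rel_X1X2 z * gp X1s + gp X2 * rel_X2sX2 z"
  "rel_central X1s = - (gp X1s * Q' - scalar (z\<^sup>2) * (Q' * gp X1s))
     - rel_X1sX1 z * gp X1s - rel_X1sX2 z * gp X2s + gp X2 * rel_X2sX1s z"
  "rel_central X2s = - (gp X2s * Q' - scalar (z\<^sup>2) * (Q' * gp X2s))
     - rel_X2sX1 z * gp X1s - scalar z * gp X1 * rel_X2sX1s z - rel_X2sX2 z * gp X2s"
  by (rule poly_mapping_eqI; simp add: fpoly_expand; auto simp: algebra_simps power2_eq_square)+

lemma relators_subset_iff:
  assumes "ring_ideal I"
  shows "relators z \<subseteq> I \<longleftrightarrow> pbw_relators z \<subseteq> I"
proof -
  interpret ring_ideal I by fact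
  have "range rel_central \<subseteq> I \<longleftrightarrow> Q'_relators z \<subseteq> I"
    if rels: "{rel_X1X2 z, rel_X1sX2 z, rel_X2sX2 z, rel_X1sX1 z, rel_X2sX1s z, rel_X2sX1 z} \<subseteq> I"
  proof
    assume "range rel_central \<subseteq> I"
    with rels show "Q'_relators z \<subseteq> I"
      unfolding Q'_relators_def Q'_relator_identities
      by (simp add: add_mem diff_mem uminus_mem mult_left_mem mult_right_mem subset_iff)
  next
    assume "Q'_relators z \<subseteq> I"
    with rels have "rel_central g \<in> I" for g
      unfolding Q'_relators_def
      by (cases g)
        (simp_all add: rel_central_identities[of z] add_mem diff_mem uminus_mem mult_left_mem mult_right_mem
          del: minus_diff_eq)
    then show "range rel_central \<subseteq> I"
      by blast
  qed
  then show ?thesis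
    unfolding relators_def pbw_relators_def using uminus_mem by auto
qed

section \<open>The function model of the free algebra\<close>

lemma fmul_wd: "fmul (wd a) (wd b) = wd (a @ b)"
proof
  fix w
  have "wd a (take n w) * wd b (drop n w) = (if w = a @ b then (if n = length a then 1 else 0) else 0)"
    if "n \<le> length w" for n
  proof -
    have "take n w = a \<and> drop n w = b \<longleftrightarrow> n = length a \<and> w = a @ b"
      using that by (metis append_eq_conv_conj append_take_drop_id length_take min.absorb2)
    then show ?thesis
      unfolding wd_def by (simp only: if_distrib mult_1_left mult_zero_left split: if_split) blast
  qed
  then have "fmul (wd a) (wd b) w
      = (\<Sum>n\<in>{0..length w}. if w = a @ b then (if n = length a then 1 else 0) else 0)"
    unfolding fmul_def by (intro sum.cong) auto
  also have "\<dots> = wd (a @ b) w"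
    by (cases "w = a @ b") (simp_all add: wd_def)
  finally show "fmul (wd a) (wd b) w = wd (a @ b) w" .
qed

lemma fscale_fscale: "fscale c (fscale d f) = fscale (c * d) f"
  by (simp add: fscale_def mult.assoc)

lemma fmul_add_left: "fmul (f + g) h = fmul f h + fmul g h"
  by (rule ext) (simp add: fmul_def distrib_right sum.distrib)

lemma fmul_add_right: "fmul h (f + g) = fmul h f + fmul h g"
  by (rule ext) (simp add: fmul_def distrib_left sum.distrib)

lemma fmul_fscale_left: "fmul (fscale c f) g = fscale c (fmul f g)"
  by (rule ext) (simp add: fmul_def fscale_def sum_distrib_left mult.assoc)

lemma fmul_fscale_right: "fmul f (fscale c g) = fscale c (fmul f g)"
  by (rule ext) (simp add: fmul_def fscale_def sum_distrib_left mult.left_commute)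

lemma lookup_plus: "Poly_Mapping.lookup (x + y) = Poly_Mapping.lookup x + Poly_Mapping.lookup y"
  by (rule ext) (simp add: lookup_add)

lemma lookup_diff: "Poly_Mapping.lookup (x - y) = Poly_Mapping.lookup x - Poly_Mapping.lookup y"
  by (rule ext) (simp add: lookup_minus)

lemma lookup_single_fscale: "Poly_Mapping.lookup (Poly_Mapping.single l c) = fscale c (wd l)"
  by (rule ext) (simp add: fscale_def wd_def lookup_single when_def)

lemma lookup_scalar_mult_fscale:
  "Poly_Mapping.lookup (scalar c * x) = fscale c (Poly_Mapping.lookup x)"
  by (rule ext) (simp add: fscale_def lookup_scalar_mult)

lemma lookup_times:
  "Poly_Mapping.lookup (x * y :: fpoly) = fmul (Poly_Mapping.lookup x) (Poly_Mapping.lookup y)"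
proof (induction x rule: poly_mapping_single_induct)
  case zero
  show ?case by (rule ext) (simp add: fmul_def)
next
  case (add_single x l c)
  have single: "Poly_Mapping.lookup (Poly_Mapping.single l c * y)
      = fmul (Poly_Mapping.lookup (Poly_Mapping.single l c)) (Poly_Mapping.lookup y)"
  proof (induction y rule: poly_mapping_single_induct)
    case zero
    show ?case by (rule ext) (simp add: fmul_def)
  next
    case (add_single y m d)
    have "Poly_Mapping.lookup (Poly_Mapping.single l c * (y + Poly_Mapping.single m d))
        = fmul (fscale c (wd l)) (Poly_Mapping.lookup y) + fscale (c * d) (wd (l @ m))"
      using add_single by (simp add: distrib_left lookup_plus mult_single plus_list_def lookup_single_fscale)
    also have "\<dots> = fmul (fscale c (wd l)) (Poly_Mapping.lookup (y + Poly_Mapping.single m d))"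
      by (simp add: lookup_plus lookup_single_fscale fmul_add_right fmul_fscale_left fmul_fscale_right
          fmul_wd fscale_fscale mult.commute)
    finally show ?case
      by (simp add: lookup_single_fscale)
  qed
  show ?case
    by (simp only: distrib_right lookup_plus fmul_add_left add_single single)
qed

lemma lookup_gp: "Poly_Mapping.lookup (gp g) = wd [g]"
  by (simp add: gp_def lookup_single_fscale fscale_def)

lemma lookup_gp_gp: "Poly_Mapping.lookup (gp g * gp h) = wd [g, h]"
  by (simp add: lookup_times lookup_gp fmul_wd)

lemma gstar_gstar [simp]: "gstar (gstar g) = g"
  by (cases g) simp_all

lemma fstar_diff: "fstar (f - g) = fstar f - fstar g"
  by (rule ext) (simp add: fstar_def)

lemma fstar_fscale: "fstar (fscale c f) = fscale (cnj c) (fstar f)"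
  by (rule ext) (simp add: fstar_def fscale_def)

lemma fstar_wd: "fstar (wd l) = wd (rev (map gstar l))"
  by (rule ext) (auto simp: fstar_def wd_def rev_map comp_def)

lemma lookup_relators:
  "Poly_Mapping.lookup (rel_X1X2 z) = wd [X1, X2] - fscale z (wd [X2, X1])"
  "Poly_Mapping.lookup (rel_X1sX2 z) = wd [X1s, X2] - fscale z (wd [X2, X1s])"
  "Poly_Mapping.lookup (rel_X2sX2 z)
     = wd [X2s, X2] - fscale (z\<^sup>2) (wd [X2, X2s]) - fscale (1 - z\<^sup>2) (wd [Qg])"
  "Poly_Mapping.lookup (rel_X1sX1 z)
     = wd [X1s, X1] - fscale (z\<^sup>2) (wd [X1, X1s]) - fscale (1 - z\<^sup>2) (wd [Qg] - wd [X2, X2s])"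
  "Poly_Mapping.lookup (rel_X2sX1s z) = wd [X2s, X1s] - fscale z (wd [X1s, X2s])"
  "Poly_Mapping.lookup (rel_X2sX1 z) = wd [X2s, X1] - fscale z (wd [X1, X2s])"
  "Poly_Mapping.lookup (rel_central g) = wd [Qg, g] - wd [g, Qg]"
  by (simp_all add: rel_X1X2_def rel_X1sX2_def rel_X2sX2_def rel_X1sX1_def rel_X2sX1s_def
      rel_X2sX1_def rel_central_def lookup_diff lookup_scalar_mult_fscale lookup_gp lookup_gp_gp)

lemma rels_eq_lookup_relators: "rels q = Poly_Mapping.lookup ` relators (complex_of_real q)"
proof -
  let ?z = "complex_of_real q"
  have base: "base_rels q = Poly_Mapping.lookup `
      ({rel_X1X2 ?z, rel_X1sX2 ?z, rel_X2sX2 ?z, rel_X1sX1 ?z} \<union> range rel_central)"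
    unfolding base_rels_def by (simp add: image_Un image_image lookup_relators full_SetCompr_eq)
  have "fstar ` Poly_Mapping.lookup ` range rel_central
      = Poly_Mapping.lookup ` range (\<lambda>g. - rel_central (gstar g))"
    by (auto simp: image_image lookup_relators lookup_uminus fstar_diff fstar_wd fun_eq_iff)
  also have "range (\<lambda>g. - rel_central (gstar g)) = range (\<lambda>g. - rel_central g)"
    by (metis (no_types) gstar_gstar image_image surjI surj_def image_comp)
  finally have "fstar ` base_rels q = Poly_Mapping.lookup `
      ({rel_X2sX1s ?z, rel_X2sX1 ?z, rel_X2sX2 ?z, rel_X1sX1 ?z} \<union> range (\<lambda>g. - rel_central g))"
    unfolding base image_Un by (simp add: lookup_relators fstar_diff fstar_fscale fstar_wd)
  then show ?thesis
    unfolding rels_def base relators_def by auto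
qed

lemma lookup_single_mult_mult_single:
  "Poly_Mapping.lookup (Poly_Mapping.single u c * r * Poly_Mapping.single v 1 :: fpoly)
     = fscale c (fmul (fmul (wd u) (Poly_Mapping.lookup r)) (wd v))"
  by (simp add: lookup_times lookup_single_fscale fmul_fscale_left fmul_fscale_right)
    (simp add: fscale_def fun_eq_iff)

lemma gen_ideal_lookup: "gen_ideal (Poly_Mapping.lookup ` R) = Poly_Mapping.lookup ` ideal_span R"
proof
  show "gen_ideal (Poly_Mapping.lookup ` R) \<subseteq> Poly_Mapping.lookup ` ideal_span R"
  proof
    fix p assume "p \<in> gen_ideal (Poly_Mapping.lookup ` R)"
    then show "p \<in> Poly_Mapping.lookup ` ideal_span R"
    proof induction
      case zero
      show ?case using ideal_span.zero by force
    next
      case (step r p c u v)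
      then obtain r' x where "r' \<in> R" "r = Poly_Mapping.lookup r'"
        and "x \<in> ideal_span R" "p = Poly_Mapping.lookup x"
        by blast
      then show ?case
        using ideal_span.step[of x R r' u c v]
        by (force simp: lookup_plus lookup_single_mult_mult_single)
    qed
  qed
  show "Poly_Mapping.lookup ` ideal_span R \<subseteq> gen_ideal (Poly_Mapping.lookup ` R)"
  proof
    fix p assume "p \<in> Poly_Mapping.lookup ` ideal_span R"
    then obtain x where "x \<in> ideal_span R" "p = Poly_Mapping.lookup x"
      by blast
    then show "p \<in> gen_ideal (Poly_Mapping.lookup ` R)"
    proof (induction x arbitrary: p)
      case zero
      then show ?case
        using gen_ideal.zero[of "Poly_Mapping.lookup ` R"] by (simp add: zero_fun_def)
    next
      case (step x r u c v)
      have "Poly_Mapping.lookup x + fscale c (fmul (fmul (wd u) (Poly_Mapping.lookup r)) (wd v))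
          \<in> gen_ideal (Poly_Mapping.lookup ` R)"
        using step by (intro gen_ideal.step) auto
      with step.prems show ?case
        by (simp only: lookup_plus lookup_single_mult_mult_single)
    qed
  qed
qed

section \<open>Spanning\<close>

lemma pbw_relator_identities:
  "gp X1s * gp X1 - (gp X1 * gp X1s + scalar (1 - z\<^sup>2) * Q') = rel_X1sX1 z"
  "gp X2s * gp X2 - (gp X2 * gp X2s + scalar (1 - z\<^sup>2) * (Q' + gp X1 * gp X1s)) = rel_X2sX2 z"
  "(Q' + gp X1 * gp X1s) * gp X2 - scalar (z\<^sup>2) * (gp X2 * (Q' + gp X1 * gp X1s))
     = (Q' * gp X2 - scalar (z\<^sup>2) * (gp X2 * Q')) + gp X1 * rel_X1sX2 z + scalar z * rel_X1X2 z * gp X1s"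
  by (rule poly_mapping_eqI; simp add: fpoly_expand; auto simp: algebra_simps power2_eq_square)+

type_synonym idx = "nat \<times> nat \<times> nat \<times> nat \<times> nat"

fun pbw :: "idx \<Rightarrow> fpoly" where
  "pbw (r, s, t, u, v) = gp X1 ^ r * (gp X2 ^ s * (gp X2s ^ t * (gp X1s ^ u * Q' ^ v)))"

interpretation falg: vector_space "\<lambda>c (x :: fpoly). scalar c * x"
  by unfold_locales (simp_all add: distrib_left distrib_right scalar_add scalar_scalar_mult)

lemma span_pbw_explicit:
  assumes "y \<in> falg.span (range pbw)"
  shows "\<exists>S c. finite S \<and> y = (\<Sum>k\<in>S. scalar (c k) * pbw k)"
proof -
  obtain T r where T: "finite T" "T \<subseteq> range pbw" "y = (\<Sum>a\<in>T. scalar (r a) * a)"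
    using assms unfolding falg.span_explicit by blast
  obtain S where S: "inj_on pbw S" "T = pbw ` S"
    using T(2) by (auto simp: subset_image_inj)
  have "finite S"
    using T(1) by (simp add: S finite_image_iff)
  moreover have "y = (\<Sum>k\<in>S. scalar (r (pbw k)) * pbw k)"
    unfolding T(3) S(2) by (simp add: sum.reindex[OF S(1)])
  ultimately show ?thesis
    by (intro exI[of _ S] exI[of _ "\<lambda>k. r (pbw k)"]) simp
qed

locale pbw_ideal = algebra_ideal I for I :: "fpoly set" +
  fixes z :: complex
  assumes z_nonzero: "z \<noteq> 0" and pbw_relators_subset: "pbw_relators z \<subseteq> I"
begin

lemma pbw_relator_mem:
  "rel_X1X2 z \<in> I" "rel_X1sX2 z \<in> I" "rel_X2sX2 z \<in> I" "rel_X1sX1 z \<in> I"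
  "rel_X2sX1s z \<in> I" "rel_X2sX1 z \<in> I"
  "Q' * gp X1 - scalar (z\<^sup>2) * (gp X1 * Q') \<in> I" "Q' * gp X2 - scalar (z\<^sup>2) * (gp X2 * Q') \<in> I"
  "gp X1s * Q' - scalar (z\<^sup>2) * (Q' * gp X1s) \<in> I" "gp X2s * Q' - scalar (z\<^sup>2) * (Q' * gp X2s) \<in> I"
  using pbw_relators_subset by (auto simp: pbw_relators_def Q'_relators_def)

lemma X1_X2: "gp X1 * gp X2 \<sim> gp X2 * gp X1"
  and X1s_X2: "gp X1s * gp X2 \<sim> gp X2 * gp X1s"
  and X2s_X1s: "gp X2s * gp X1s \<sim> gp X1s * gp X2s"
  and X2s_X1: "gp X2s * gp X1 \<sim> gp X1 * gp X2s"
  using pbw_relator_mem(1,2,5,6) z_nonzero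
  by (auto intro!: proportionalI simp: cong_def rel_X1X2_def rel_X1sX2_def rel_X2sX1s_def rel_X2sX1_def)

lemma Q'_X1: "Q' * gp X1 \<sim> gp X1 * Q'"
  and Q'_X2: "Q' * gp X2 \<sim> gp X2 * Q'"
  and X1s_Q': "gp X1s * Q' \<sim> Q' * gp X1s"
  and X2s_Q': "gp X2s * Q' \<sim> Q' * gp X2s"
  using pbw_relator_mem(7-10) z_nonzero by (auto intro!: proportionalI[of "z\<^sup>2"] simp: cong_def)

lemma X1s_X1: "gp X1s * gp X1 \<approx> gp X1 * gp X1s + scalar (1 - z\<^sup>2) * Q'"
  and X2s_X2: "gp X2s * gp X2 \<approx> gp X2 * gp X2s + scalar (1 - z\<^sup>2) * (Q' + gp X1 * gp X1s)"
  using pbw_relator_mem(3,4) by (simp_all add: cong_def pbw_relator_identities)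

lemma Q'_X1X1s_X2: "(Q' + gp X1 * gp X1s) * gp X2 \<sim> gp X2 * (Q' + gp X1 * gp X1s)"
proof -
  have "(Q' + gp X1 * gp X1s) * gp X2 \<approx> scalar (z\<^sup>2) * (gp X2 * (Q' + gp X1 * gp X1s))"
    unfolding cong_def pbw_relator_identities
    using pbw_relator_mem by (simp add: add_mem mult_left_mem mult_right_mem)
  then show ?thesis
    using z_nonzero by (intro proportionalI) simp_all
qed

lemma Q'_pbw: "Q' * pbw (r, s, t, u, v) \<sim> pbw (r, s, t, u, Suc v)"
proof -
  have "Q' * pbw (r, s, t, u, v) \<sim> gp X1 ^ r * (Q' * (gp X2 ^ s * (gp X2s ^ t * (gp X1s ^ u * Q' ^ v))))"
    using Q'_X1 by (simp add: proportional_swap proportional_swap_power)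
  also have "\<dots> \<sim> gp X1 ^ r * (gp X2 ^ s * (Q' * (gp X2s ^ t * (gp X1s ^ u * Q' ^ v))))"
    using Q'_X2 by (intro proportional_mult_left proportional_swap proportional_swap_power)
  also have "\<dots> \<sim> gp X1 ^ r * (gp X2 ^ s * (gp X2s ^ t * (Q' * (gp X1s ^ u * Q' ^ v))))"
    using proportional_sym[OF X2s_Q']
    by (intro proportional_mult_left proportional_swap proportional_swap_power)
  also have "\<dots> \<sim> gp X1 ^ r * (gp X2 ^ s * (gp X2s ^ t * (gp X1s ^ u * (Q' * Q' ^ v))))"
    using proportional_sym[OF X1s_Q']
    by (intro proportional_mult_left proportional_swap proportional_swap_power)
  finally show ?thesis
    by simp
qed

lemma X1s_pbw_0: "gp X1s * pbw (0, s, t, u, v) \<sim> pbw (0, s, t, Suc u, v)"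
proof -
  have "gp X1s * pbw (0, s, t, u, v) \<sim> gp X2 ^ s * (gp X1s * (gp X2s ^ t * (gp X1s ^ u * Q' ^ v)))"
    using X1s_X2 by (simp add: proportional_swap proportional_swap_power)
  also have "\<dots> \<sim> gp X2 ^ s * (gp X2s ^ t * (gp X1s * (gp X1s ^ u * Q' ^ v)))"
    using proportional_sym[OF X2s_X1s]
    by (intro proportional_mult_left proportional_swap proportional_swap_power)
  finally show ?thesis
    by (simp add: mult.assoc)
qed

lemma X1_pbw: "gp X1 * pbw (r, s, t, u, v) = pbw (Suc r, s, t, u, v)"
  by (simp add: mult.assoc)

lemma X2_pbw: "gp X2 * pbw (r, s, t, u, v) \<sim> pbw (r, Suc s, t, u, v)"
proof -
  have "gp X2 * pbw (r, s, t, u, v) \<sim> gp X1 ^ r * (gp X2 * (gp X2 ^ s * (gp X2s ^ t * (gp X1s ^ u * Q' ^ v))))"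
    using proportional_sym[OF X1_X2] by (simp add: proportional_swap proportional_swap_power)
  then show ?thesis
    by (simp add: mult.assoc)
qed

lemma X1_power_pbw: "gp X1 ^ r * pbw (0, s, t, u, v) = pbw (r, s, t, u, v)"
  by simp

lemma X1_power_X2_power_pbw: "gp X1 ^ r * (gp X2 ^ s * pbw (0, 0, t, u, v)) = pbw (r, s, t, u, v)"
  by simp

definition reducible :: "fpoly set" where
  "reducible = {x. \<exists>y \<in> falg.span (range pbw). x \<approx> y}"

lemma reducible_add: "x \<in> reducible \<Longrightarrow> y \<in> reducible \<Longrightarrow> x + y \<in> reducible"
  unfolding reducible_def using falg.span_add cong_add by blast

lemma reducible_scalar: "x \<in> reducible \<Longrightarrow> scalar c * x \<in> reducible"
  unfolding reducible_def using falg.span_scale cong_mult_left by blast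

lemma reducible_cong: "x \<approx> y \<Longrightarrow> y \<in> reducible \<Longrightarrow> x \<in> reducible"
  unfolding reducible_def using cong_trans by blast

lemma pbw_reducible: "pbw k \<in> reducible"
  unfolding reducible_def using falg.span_base[of "pbw k" "range pbw"] cong_refl by blast

lemma reducible_proportional: "x \<sim> y \<Longrightarrow> y \<in> reducible \<Longrightarrow> x \<in> reducible"
  unfolding proportional_def using reducible_cong reducible_scalar by blast

lemma reducible_proportional_pbw: "x \<sim> pbw k \<Longrightarrow> x \<in> reducible"
  using reducible_proportional pbw_reducible by blast

lemma reducible_mult_left:
  assumes a: "\<And>k. a * pbw k \<in> reducible" and x: "x \<in> reducible"
  shows "a * x \<in> reducible"
proof -
  obtain y where y: "y \<in> falg.span (range pbw)" "x \<approx> y"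
    using x unfolding reducible_def by blast
  from y(1) have "a * y \<in> reducible"
  proof (induction rule: falg.span_induct_alt)
    case base
    show ?case
      unfolding reducible_def using falg.span_zero[of "range pbw"] cong_refl[of 0] by force
  next
    case (step c b y)
    then obtain k where "b = pbw k" by blast
    have "a * (scalar c * b + y) = scalar c * (a * b) + a * y"
      by (simp add: distrib_left mult_scalar_mult)
    also have "\<dots> \<in> reducible"
      using step.IH a \<open>b = pbw k\<close> by (intro reducible_add reducible_scalar) simp_all
    finally show ?case .
  qed
  then show ?thesis
    using reducible_cong[OF cong_mult_left[OF y(2)]] by blast
qed

lemma X1s_pbw: "gp X1s * pbw (r, s, t, u, v) \<in> reducible"
proof (cases r)
  case 0
  then show ?thesis
    using X1s_pbw_0 reducible_proportional_pbw by blast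
next
  case (Suc r')
  let ?T = "pbw (0, s, t, u, v)"
  obtain \<gamma> where \<gamma>:
    "gp X1s * gp X1 ^ Suc r' \<approx> gp X1 ^ Suc r' * gp X1s + scalar \<gamma> * (gp X1 ^ r' * Q')"
    using skew_commute_power[OF X1s_X1 Q'_X1] by blast
  have "gp X1s * pbw (r, s, t, u, v) = (gp X1s * gp X1 ^ Suc r') * ?T"
    by (simp add: Suc mult.assoc del: power_Suc)
  also have "\<dots> \<approx> (gp X1 ^ Suc r' * gp X1s + scalar \<gamma> * (gp X1 ^ r' * Q')) * ?T"
    using \<gamma> by (rule cong_mult_right)
  also have "\<dots> = gp X1 ^ Suc r' * (gp X1s * ?T) + scalar \<gamma> * (gp X1 ^ r' * (Q' * ?T))"
    by (simp add: distrib_right mult.assoc del: pbw.simps power_Suc)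
  finally show ?thesis
  proof (rule reducible_cong[OF _ reducible_add[OF _ reducible_scalar]])
    have "gp X1 ^ Suc r' * (gp X1s * ?T) \<sim> gp X1 ^ Suc r' * pbw (0, s, t, Suc u, v)"
      using X1s_pbw_0 by (rule proportional_mult_left)
    then show "gp X1 ^ Suc r' * (gp X1s * ?T) \<in> reducible"
      unfolding X1_power_pbw by (rule reducible_proportional_pbw)
    have "gp X1 ^ r' * (Q' * ?T) \<sim> gp X1 ^ r' * pbw (0, s, t, u, Suc v)"
      using Q'_pbw by (rule proportional_mult_left)
    then show "gp X1 ^ r' * (Q' * ?T) \<in> reducible"
      unfolding X1_power_pbw by (rule reducible_proportional_pbw)
  qed
qed

lemma X2s_pbw: "gp X2s * pbw (r, s, t, u, v) \<in> reducible"
proof -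
  let ?R = "pbw (0, 0, t, u, v)"
  have X2s_R: "gp X2s * ?R = pbw (0, 0, Suc t, u, v)"
    by (simp add: mult.assoc)
  have "gp X2s * pbw (r, s, t, u, v) \<sim> gp X1 ^ r * (gp X2s * (gp X2 ^ s * ?R))"
    using X2s_X1 by (simp add: proportional_swap proportional_swap_power)
  moreover have "gp X1 ^ r * (gp X2s * (gp X2 ^ s * ?R)) \<in> reducible"
  proof (cases s)
    case 0
    show ?thesis
      unfolding 0 power_0 mult_1_left X2s_R X1_power_pbw
      by (rule reducible_proportional_pbw[OF proportional_refl])
  next
    case (Suc s')
    obtain \<gamma> where \<gamma>: "gp X2s * gp X2 ^ Suc s'
        \<approx> gp X2 ^ Suc s' * gp X2s + scalar \<gamma> * (gp X2 ^ s' * (Q' + gp X1 * gp X1s))"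
      using skew_commute_power[OF X2s_X2 Q'_X1X1s_X2] by blast
    have "gp X1 ^ r * (gp X2s * (gp X2 ^ s * ?R)) = gp X1 ^ r * (gp X2s * gp X2 ^ Suc s') * ?R"
      by (simp add: Suc mult.assoc del: power_Suc pbw.simps)
    also have "\<dots> \<approx> gp X1 ^ r * (gp X2 ^ Suc s' * gp X2s
        + scalar \<gamma> * (gp X2 ^ s' * (Q' + gp X1 * gp X1s))) * ?R"
      using \<gamma> by (rule cong_mult)
    also have "\<dots> = gp X1 ^ r * (gp X2 ^ Suc s' * (gp X2s * ?R))
        + scalar \<gamma> * (gp X1 ^ r * (gp X2 ^ s' * (Q' * ?R))
          + gp X1 ^ r * (gp X2 ^ s' * (gp X1 * (gp X1s * ?R))))"
      by (simp add: distrib_left distrib_right mult.assoc mult_scalar_mult del: power_Suc pbw.simps)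
    finally show ?thesis
    proof (rule reducible_cong[OF _ reducible_add[OF _ reducible_scalar[OF reducible_add]]])
      show "gp X1 ^ r * (gp X2 ^ Suc s' * (gp X2s * ?R)) \<in> reducible"
        unfolding X2s_R X1_power_X2_power_pbw
        by (rule reducible_proportional_pbw[OF proportional_refl])
      have "gp X1 ^ r * (gp X2 ^ s' * (Q' * ?R)) \<sim> gp X1 ^ r * (gp X2 ^ s' * pbw (0, 0, t, u, Suc v))"
        using Q'_pbw by (intro proportional_mult_left)
      then show "gp X1 ^ r * (gp X2 ^ s' * (Q' * ?R)) \<in> reducible"
        unfolding X1_power_X2_power_pbw by (rule reducible_proportional_pbw)
      have "gp X2 ^ s' * (gp X1 * (gp X1s * ?R)) \<sim> gp X1 * (gp X2 ^ s' * (gp X1s * ?R))"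
        using proportional_sym[OF proportional_swap_power[OF X1_X2]] by (rule proportional_swap)
      also have "\<dots> \<sim> gp X1 * (gp X2 ^ s' * pbw (0, 0, t, Suc u, v))"
        using X1s_pbw_0 by (intro proportional_mult_left)
      finally have "gp X1 ^ r * (gp X2 ^ s' * (gp X1 * (gp X1s * ?R)))
          \<sim> gp X1 ^ Suc r * (gp X2 ^ s' * pbw (0, 0, t, Suc u, v))"
        using proportional_mult_left by (simp only: power_Suc2 mult.assoc)
      then show "gp X1 ^ r * (gp X2 ^ s' * (gp X1 * (gp X1s * ?R))) \<in> reducible"
        unfolding X1_power_X2_power_pbw by (rule reducible_proportional_pbw)
    qed
  qed
  ultimately show ?thesis
    by (rule reducible_proportional)
qed

lemma gp_pbw: "gp g * pbw k \<in> reducible"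
proof -
  have X1: "gp X1 * pbw j \<in> reducible" for j
    by (cases j rule: prod_cases5) (simp only: X1_pbw pbw_reducible)
  have X2: "gp X2 * pbw j \<in> reducible" for j
    by (cases j rule: prod_cases5) (simp only: reducible_proportional_pbw[OF X2_pbw])
  have X1s: "gp X1s * pbw j \<in> reducible" for j
    by (cases j rule: prod_cases5) (simp only: X1s_pbw)
  have X2s: "gp X2s * pbw j \<in> reducible" for j
    by (cases j rule: prod_cases5) (simp only: X2s_pbw)
  have Q': "Q' * pbw k \<in> reducible"
    by (cases k rule: prod_cases5) (simp only: reducible_proportional_pbw[OF Q'_pbw])
  have "gp Qg * pbw k = Q' * pbw k + gp X1 * (gp X1s * pbw k) + gp X2 * (gp X2s * pbw k)"
    by (simp add: Q'_def algebra_simps del: pbw.simps)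
  also have "\<dots> \<in> reducible"
    by (intro reducible_add Q' reducible_mult_left[OF X1 X1s] reducible_mult_left[OF X2 X2s])
  finally show ?thesis
    using X1 X2 X1s X2s by (cases g) simp_all
qed

lemma reducible_all: "x \<in> reducible"
proof (induction x rule: poly_mapping_single_induct)
  case zero
  show ?case
    using reducible_scalar[OF pbw_reducible, of 0] by simp
next
  case (add_single x l c)
  have "Poly_Mapping.single l c \<in> reducible"
  proof (induction l)
    case Nil
    show ?case
      using reducible_scalar[OF pbw_reducible, of c "(0, 0, 0, 0, 0)"]
      by (simp add: scalar_def zero_list_def)
  next
    case (Cons g l)
    then show ?case
      unfolding single_Cons using gp_pbw by (rule reducible_mult_left[rotated])
  qed
  with add_single show ?case
    by (rule reducible_add)
qed

theorem pbw_combination_mod_ideal: "\<exists>S c. finite S \<and> x - (\<Sum>k\<in>S. scalar (c k) * pbw k) \<in> I"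
proof -
  obtain y where y: "y \<in> falg.span (range pbw)" "x \<approx> y"
    using reducible_all[of x] unfolding reducible_def by blast
  obtain S c where "finite S" "y = (\<Sum>k\<in>S. scalar (c k) * pbw k)"
    using span_pbw_explicit[OF y(1)] by blast
  with y(2) show ?thesis
    unfolding cong_def by blast
qed

end

section \<open>Independence\<close>

lemma sum_fun_apply: "(\<Sum>k\<in>S. f k) x = (\<Sum>k\<in>S. f k x)"
  by (induction S rule: infinite_finite_induct) simp_all

type_synonym vec = "idx \<Rightarrow> complex"

definition vscale :: "complex \<Rightarrow> vec \<Rightarrow> vec" where
  "vscale c x = (\<lambda>k. c * x k)"

interpretation V: vector_space_pair vscale vscale
  by unfold_locales (auto simp: vscale_def fun_eq_iff algebra_simps)

abbreviation vec_linear :: "(vec \<Rightarrow> vec) \<Rightarrow> bool" where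
  "vec_linear f \<equiv> Vector_Spaces.linear vscale vscale f"

locale pbw_action =
  fixes z :: complex
  assumes z_nonzero: "z \<noteq> 0"
begin

(* Left multiplication by X1, X2, Q', X1*, X2* in the coordinates of the ordered monomials, as the
   reduction computes it; e.g. X2 X1^r = z^-r X1^r X2 gives the factor in op_X2. *)
definition op_X1 :: "vec \<Rightarrow> vec" where
  "op_X1 x = (\<lambda>(r, s, t, u, v). case r of 0 \<Rightarrow> 0 | Suc r' \<Rightarrow> x (r', s, t, u, v))"

definition op_X2 :: "vec \<Rightarrow> vec" where
  "op_X2 x = (\<lambda>(r, s, t, u, v).
     case s of 0 \<Rightarrow> 0 | Suc s' \<Rightarrow> inverse z ^ r * x (r, s', t, u, v))"

definition op_Q' :: "vec \<Rightarrow> vec" where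
  "op_Q' x = (\<lambda>(r, s, t, u, v). case v of 0 \<Rightarrow> 0
     | Suc v' \<Rightarrow> z ^ (r + r + s + s) * inverse z ^ (t + t + u + u) * x (r, s, t, u, v'))"

definition op_X1s :: "vec \<Rightarrow> vec" where
  "op_X1s x = (\<lambda>(r, s, t, u, v).
     (case u of 0 \<Rightarrow> 0 | Suc u' \<Rightarrow> z ^ s * inverse z ^ t * x (r, s, t, u', v))
     + (case v of 0 \<Rightarrow> 0 | Suc v' \<Rightarrow>
         (1 - z ^ (r + r + 2)) * z ^ (s + s) * inverse z ^ (t + t + u + u) * x (Suc r, s, t, u, v')))"

definition op_X2s :: "vec \<Rightarrow> vec" where
  "op_X2s x = (\<lambda>(r, s, t, u, v).
     (case t of 0 \<Rightarrow> 0 | Suc t' \<Rightarrow> z ^ r * x (r, s, t', u, v))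
     + (case v of 0 \<Rightarrow> 0 | Suc v' \<Rightarrow>
         (1 - z ^ (s + s + 2)) * z ^ r * inverse z ^ (t + t + u + u) * x (r, Suc s, t, u, v'))
     + (case r of 0 \<Rightarrow> 0 | Suc r' \<Rightarrow> (case u of 0 \<Rightarrow> 0 | Suc u' \<Rightarrow>
         (1 - z ^ (s + s + 2)) * z ^ Suc r' * inverse z ^ (Suc s + t) * x (r', Suc s, t, u', v))))"

lemmas op_defs = op_X1_def op_X2_def op_Q'_def op_X1s_def op_X2s_def

lemma linear_ops:
  "vec_linear op_X1" "vec_linear op_X2" "vec_linear op_Q'" "vec_linear op_X1s" "vec_linear op_X2s"
  by (unfold_locales; auto simp: op_defs vscale_def fun_eq_iff algebra_simps split: nat.split)+

lemma op_relations:
  "op_X1 (op_X2 x) k = z * op_X2 (op_X1 x) k"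
  "op_X1s (op_X2 x) k = z * op_X2 (op_X1s x) k"
  "op_X2s (op_X1s x) k = z * op_X1s (op_X2s x) k"
  "op_X2s (op_X1 x) k = z * op_X1 (op_X2s x) k"
  "op_X1s (op_X1 x) k = op_X1 (op_X1s x) k + (1 - z\<^sup>2) * op_Q' x k"
  "op_X2s (op_X2 x) k = op_X2 (op_X2s x) k + (1 - z\<^sup>2) * (op_Q' x k + op_X1 (op_X1s x) k)"
  "op_Q' (op_X1 x) k = z\<^sup>2 * op_X1 (op_Q' x) k"
  "op_Q' (op_X2 x) k = z\<^sup>2 * op_X2 (op_Q' x) k"
  "op_X1s (op_Q' x) k = z\<^sup>2 * op_Q' (op_X1s x) k"
  "op_X2s (op_Q' x) k = z\<^sup>2 * op_Q' (op_X2s x) k"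
  using z_nonzero
  by (cases k rule: prod_cases5;
      simp add: op_defs split: nat.split; auto simp: field_simps power_add power2_eq_square)+

primrec act :: "gen \<Rightarrow> vec \<Rightarrow> vec" where
  "act X1 = op_X1"
| "act X1s = op_X1s"
| "act X2 = op_X2"
| "act X2s = op_X2s"
| "act Qg = (\<lambda>x. op_Q' x + op_X1 (op_X1s x) + op_X2 (op_X2s x))"

primrec act_word :: "gen list \<Rightarrow> vec \<Rightarrow> vec" where
  "act_word [] x = x"
| "act_word (g # l) x = act g (act_word l x)"

lemma linear_act: "vec_linear (act g)"
proof (cases g)
  case Qg
  have "vec_linear (\<lambda>x. op_Q' x + op_X1 (op_X1s x) + op_X2 (op_X2s x))"
    using linear_ops Vector_Spaces.linear_compose[of vscale vscale _ vscale]
    by (intro V.linear_compose_add) (auto simp: comp_def)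
  with Qg show ?thesis
    by simp
qed (simp_all add: linear_ops)

lemma linear_act_word: "vec_linear (act_word l)"
proof (induction l)
  case Nil
  show ?case
    using V.vs1.linear_id by (simp add: id_def)
next
  case (Cons g l)
  then show ?case
    using Vector_Spaces.linear_compose[OF Cons linear_act[of g]] by (simp add: comp_def)
qed

lemma act_word_append: "act_word (l @ m) x = act_word l (act_word m x)"
  by (induction l) simp_all

definition action :: "fpoly \<Rightarrow> vec \<Rightarrow> vec" where
  "action a x = (\<Sum>l\<in>Poly_Mapping.keys a. vscale (Poly_Mapping.lookup a l) (act_word l x))"

lemma action_eq_sum:
  assumes "finite S" and "Poly_Mapping.keys a \<subseteq> S"
  shows "action a x = (\<Sum>l\<in>S. vscale (Poly_Mapping.lookup a l) (act_word l x))"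
  unfolding action_def using assms by (intro sum.mono_neutral_left) (auto simp: in_keys_iff)

lemma additive_action: "additive (\<lambda>a. action a x)"
proof
  fix a b :: fpoly
  let ?S = "Poly_Mapping.keys a \<union> Poly_Mapping.keys b"
  have "Poly_Mapping.keys (a + b) \<subseteq> ?S"
    by (rule keys_add)
  then show "action (a + b) x = action a x + action b x"
    by (simp add: action_eq_sum[of ?S] lookup_add V.vs1.scale_left_distrib sum.distrib)
qed

lemma action_single: "action (Poly_Mapping.single l c) x = vscale c (act_word l x)"
  by (simp add: action_eq_sum[of "{l}"])

lemma action_zero_vec: "action a 0 = 0"
  by (simp add: action_def V.linear_0[OF linear_act_word])

lemma action_single_mult:
  "action (Poly_Mapping.single l c * b) x = vscale c (act_word l (action b x))"
proof (induction b rule: poly_mapping_single_induct)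
  case zero
  show ?case
    by (simp only: mult_zero_right additive.zero[OF additive_action] V.linear_0[OF linear_act_word]
        V.vs1.scale_zero_right)
next
  case (add_single b m d)
  have "action (Poly_Mapping.single l c * (b + Poly_Mapping.single m d)) x
      = vscale c (act_word l (action b x)) + vscale (c * d) (act_word l (act_word m x))"
    by (simp only: distrib_left additive.add[OF additive_action] mult_single plus_list_def
        add_single action_single act_word_append)
  also have "\<dots> = vscale c (act_word l (action (b + Poly_Mapping.single m d) x))"
    by (simp only: additive.add[OF additive_action] action_single V.linear_add[OF linear_act_word]
        V.linear_scale[OF linear_act_word] V.vs1.scale_right_distrib V.vs1.scale_scale)
  finally show ?case .
qed

lemma action_mult: "action (a * b) x = action a (action b x)"
proof (induction a rule: poly_mapping_single_induct)
  case zero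
  show ?case
    using additive.zero[OF additive_action] by simp
next
  case (add_single a l c)
  then show ?case
    by (simp add: distrib_right additive.add[OF additive_action] action_single_mult action_single)
qed

lemma action_diff: "action (a - b) x = action a x - action b x"
  by (rule additive.diff[OF additive_action])

lemma action_scalar: "action (scalar c) x = vscale c x"
  by (simp add: scalar_def action_single zero_list_def)

lemma action_gp: "action (gp g) = act g"
  by (simp add: gp_def action_single vscale_def fun_eq_iff)

lemma action_Q': "action Q' = op_Q'"
  by (simp add: Q'_def action_diff action_mult action_gp fun_eq_iff)

definition kernel :: "fpoly set" where
  "kernel = {a. \<forall>x. action a x = 0}"

lemma ring_ideal_kernel: "ring_ideal kernel"
  by unfold_locales
    (simp_all add: kernel_def additive.zero[OF additive_action] additive.add[OF additive_action]
      action_mult action_zero_vec)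

lemma pbw_relators_kernel: "pbw_relators z \<subseteq> kernel"
  unfolding pbw_relators_def Q'_relators_def kernel_def rel_X1X2_def rel_X1sX2_def rel_X2sX2_def
    rel_X1sX1_def rel_X2sX1s_def rel_X2sX1_def
  by (simp add: action_diff action_mult action_scalar action_gp action_Q';
      simp add: fun_eq_iff vscale_def op_relations algebra_simps)

definition unit_vec :: "idx \<Rightarrow> vec" where
  "unit_vec k = (\<lambda>j. if j = k then 1 else 0)"

lemma action_power: "action (a ^ n) x = (action a ^^ n) x"
  by (induction n) (simp_all add: action_mult action_scalar[of 1, simplified] vscale_def)

lemma ops_unit_vec:
  "(op_Q' ^^ v) (unit_vec (0, 0, 0, 0, 0)) = unit_vec (0, 0, 0, 0, v)"
  "(op_X1s ^^ u) (unit_vec (0, 0, 0, 0, v)) = unit_vec (0, 0, 0, u, v)"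
  "(op_X2s ^^ t) (unit_vec (0, 0, 0, u, v)) = unit_vec (0, 0, t, u, v)"
  "(op_X2 ^^ s) (unit_vec (0, 0, t, u, v)) = unit_vec (0, s, t, u, v)"
  "(op_X1 ^^ r) (unit_vec (0, s, t, u, v)) = unit_vec (r, s, t, u, v)"
  subgoal by (induction v) (auto simp: unit_vec_def op_Q'_def fun_eq_iff split: nat.split)
  subgoal by (induction u) (auto simp: unit_vec_def op_X1s_def fun_eq_iff split: nat.split)
  subgoal by (induction t) (auto simp: unit_vec_def op_X2s_def fun_eq_iff split: nat.split)
  subgoal by (induction s) (auto simp: unit_vec_def op_X2_def fun_eq_iff split: nat.split)
  subgoal by (induction r) (auto simp: unit_vec_def op_X1_def fun_eq_iff split: nat.split)
  done

lemma action_pbw_unit_vec: "action (pbw k) (unit_vec (0, 0, 0, 0, 0)) = unit_vec k"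
  by (cases k rule: prod_cases5) (simp add: action_mult action_power action_gp action_Q' ops_unit_vec)

lemma kernel_pbw_combination:
  assumes S: "finite S" and ker: "(\<Sum>k\<in>S. scalar (c k) * pbw k) \<in> kernel" and k0: "k0 \<in> S"
  shows "c k0 = 0"
proof -
  have "action (\<Sum>k\<in>S. scalar (c k) * pbw k) (unit_vec (0, 0, 0, 0, 0)) = 0"
    using ker by (simp add: kernel_def)
  then have "(\<Sum>k\<in>S. vscale (c k) (unit_vec k)) k0 = 0"
    by (simp add: additive.sum[OF additive_action] action_mult action_scalar action_pbw_unit_vec)
  moreover have "(\<Sum>k\<in>S. vscale (c k) (unit_vec k)) k0 = c k0"
    using S k0 by (simp add: sum_fun_apply vscale_def unit_vec_def if_distrib cong: if_cong)
  ultimately show ?thesis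
    by simp
qed

end

lemma lookup_sum_fun: "Poly_Mapping.lookup (\<Sum>k\<in>S. f k) = (\<Sum>k\<in>S. Poly_Mapping.lookup (f k))"
  by (rule ext) (simp add: lookup_sum sum_fun_apply)

lemma lookup_Q'_power: "Poly_Mapping.lookup (Q' ^ v) = fpow Qprime v"
proof (induction v)
  case 0
  show ?case
    using lookup_single_fscale[of "[]" 1] by (simp add: fpow_def fscale_def flip: zero_list_def)
next
  case (Suc v)
  have "Poly_Mapping.lookup Q' = Qprime"
    by (simp add: Q'_def Qprime_def lookup_diff lookup_gp lookup_gp_gp)
  with Suc show ?case
    by (simp add: lookup_times fpow_def)
qed

lemma lookup_pbw: "Poly_Mapping.lookup (pbw k) = monomial k"
proof (cases k rule: prod_cases5)
  case (fields r s t u v)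
  have "pbw k = Poly_Mapping.single (replicate r X1 @ replicate s X2 @ replicate t X2s @ replicate u X1s) 1
      * Q' ^ v"
    by (simp add: fields gp_power mult_single plus_list_def flip: mult.assoc)
  then show ?thesis
    by (simp add: fields monomial_def lookup_times lookup_single_fscale lookup_Q'_power fscale_def)
qed

lemma lookup_pbw_combination:
  "Poly_Mapping.lookup (\<Sum>k\<in>S. scalar (c k) * pbw k) = (\<Sum>k\<in>S. fscale (c k) (monomial k))"
  by (simp add: lookup_sum_fun lookup_scalar_mult_fscale lookup_pbw)

lemma gen_ideal_rels: "gen_ideal (rels q) = Poly_Mapping.lookup ` ideal_span (relators (complex_of_real q))"
  by (simp add: rels_eq_lookup_relators gen_ideal_lookup)

theorem monomials_span:
  assumes q: "q \<noteq> 0" and f: "finite {w. f w \<noteq> 0}"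
  shows "\<exists>S c. finite S \<and> f - (\<Sum>k\<in>S. fscale (c k) (monomial k)) \<in> gen_ideal (rels q)"
proof -
  let ?z = "complex_of_real q"
  let ?I = "ideal_span (relators ?z)"
  interpret ring_ideal ?I
    by (rule ring_ideal_ideal_span)
  have "pbw_relators ?z \<subseteq> ?I"
    using relators_subset_iff[OF ring_ideal_ideal_span] subset_ideal_span by blast
  with q interpret pbw_ideal ?I ?z
    by unfold_locales simp_all
  obtain S c where "finite S" and "Abs_poly_mapping f - (\<Sum>k\<in>S. scalar (c k) * pbw k) \<in> ?I"
    using pbw_combination_mod_ideal by blast
  then have "Poly_Mapping.lookup (Abs_poly_mapping f - (\<Sum>k\<in>S. scalar (c k) * pbw k)) \<in> gen_ideal (rels q)"
    unfolding gen_ideal_rels by blast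
  then have "f - (\<Sum>k\<in>S. fscale (c k) (monomial k)) \<in> gen_ideal (rels q)"
    using f by (simp add: lookup_diff lookup_pbw_combination Abs_poly_mapping_inverse)
  with \<open>finite S\<close> show ?thesis
    by blast
qed

theorem monomials_independent:
  assumes q: "q \<noteq> 0" and S: "finite S"
    and mem: "(\<Sum>k\<in>S. fscale (c k) (monomial k)) \<in> gen_ideal (rels q)"
  shows "\<forall>k\<in>S. c k = 0"
proof -
  let ?z = "complex_of_real q"
  interpret pbw_action ?z
    using q by unfold_locales simp
  have "relators ?z \<subseteq> kernel"
    using relators_subset_iff[OF ring_ideal_kernel] pbw_relators_kernel by simp
  then have ker: "ideal_span (relators ?z) \<subseteq> kernel"
    by (rule ideal_span_subset[OF ring_ideal_kernel])
  obtain y where y: "y \<in> ideal_span (relators ?z)"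
    and "Poly_Mapping.lookup y = (\<Sum>k\<in>S. fscale (c k) (monomial k))"
    using mem unfolding gen_ideal_rels by (rule imageE) simp
  then have "y = (\<Sum>k\<in>S. scalar (c k) * pbw k)"
    by (simp add: poly_mapping_eq_iff lookup_pbw_combination)
  with y ker have "(\<Sum>k\<in>S. scalar (c k) * pbw k) \<in> kernel"
    by blast
  then show ?thesis
    using kernel_pbw_combination[OF S] by blast
qed

theorem lemma3p5p5:
  fixes q :: real
  assumes "0 < q" and "q < 1"
  shows "(\<forall>f :: elt. finite {w. f w \<noteq> 0} \<longrightarrow>
            (\<exists>S c. finite S \<and>
               f - (\<Sum>k\<in>S. fscale (c k) (monomial k)) \<in> gen_ideal (rels q)))
       \<and> (\<forall>S c. finite S \<longrightarrow>
            (\<Sum>k\<in>S. fscale (c k) (monomial k)) \<in> gen_ideal (rels q) \<longrightarrow>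
            (\<forall>k\<in>S. c k = 0))"
proof -
  have "q \<noteq> 0"
    using \<open>0 < q\<close> by simp
  then show ?thesis
    using monomials_span monomials_independent by blast
qed

end
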